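(* Let $(X,d)$ be a metric space admitting a weak conical bicombing, and let $T:X\rightarrow X$ be an isometric embedding (i.e. $d(Tx,Ty)=d(x,y)$ for all $x,y\in X$). Put $d_T=\inf_{x\in X}d(x,Tx)$. Then there is a metric functional $h\in\overline{X}$ such that \[ h(Tx)=h(x)-d_T\quad\text{for all }x\in X. \] If $h=h_{y}$ for some point $y\in X$, then $Ty=y$. If $T$ is an isometry (a surjective isometric embedding), then $Th=h$.
   Context: Let $(X,d)$ be a metric space and fix a base point $x_0\in X$. Let $\mathrm{Hom}(X,\mathbb{R})$ be the set of $1$-Lipschitz functions $X\to\mathbb{R}$ with the topology of pointwise convergence. For $x\in X$ set $h_x(\cdot)=d(\cdot,x)-d(x_0,x)$. The metric compactification $\overline{X}$ is the closure of $\{h_x:x\in X\}$ in $\mathrm{Hom}(X,\mathbb{R})$ (it is compact); its elements are called metric functionals. A surjective isometry $T$ of $X$ acts on $\overline{X}$ by $(Th)(x)=h(T^{-1}x)-h(T^{-1}x_0)$. A weak conical bicombing on $X$ is a map $\sigma:X\times X\times[0,1]\to X$, $(x,y,t)\mapsto\sigma_{xy}(t)$, such that for all $x,y$ the path $\sigma_{xy}$ is a constant speed geodesic from $x$ to $y$ (i.e. $\sigma_{xy}(0)=x$, $\sigma_{xy}(1)=y$, $d(\sigma_{xy}(s),\sigma_{xy}(t))=|s-t|\,d(x,y)$), and $d(\sigma_{xy}(t),\sigma_{xy'}(t))\le t\,d(y,y')$ for all $x,y,y'\in X$ and $t\in[0,1]$. *)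

theory Defs
  imports "HOL-Analysis.Analysis"
begin

text \<open>The functions of type 'a => real carry the product topology
(pointwise convergence), instantiated in HOL-Analysis Function_Topology.\<close>

definition one_lipschitz :: "('a::metric_space \<Rightarrow> real) \<Rightarrow> bool" where
  "one_lipschitz f \<longleftrightarrow> (\<forall>x y. \<bar>f x - f y\<bar> \<le> dist x y)"

definition hfun :: "'a::metric_space \<Rightarrow> 'a \<Rightarrow> ('a \<Rightarrow> real)" where
  "hfun x0 x = (\<lambda>z. dist z x - dist x0 x)"

definition metric_compactification :: "'a::metric_space \<Rightarrow> ('a \<Rightarrow> real) set" where
  "metric_compactification x0 = closure (range (hfun x0)) \<inter> {f. one_lipschitz f}"

definition weak_conical_bicombing :: "('a::metric_space \<Rightarrow> 'a \<Rightarrow> real \<Rightarrow> 'a) \<Rightarrow> bool" where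
  "weak_conical_bicombing \<sigma> \<longleftrightarrow>
     (\<forall>x y. \<sigma> x y 0 = x \<and> \<sigma> x y 1 = y \<and>
        (\<forall>s\<in>{0..1}. \<forall>t\<in>{0..1}. dist (\<sigma> x y s) (\<sigma> x y t) = \<bar>s - t\<bar> * dist x y)) \<and>
     (\<forall>x y y'. \<forall>t\<in>{0..1}. dist (\<sigma> x y t) (\<sigma> x y' t) \<le> t * dist y y')"

definition isom_act :: "'a \<Rightarrow> ('a \<Rightarrow> 'a) \<Rightarrow> ('a \<Rightarrow> real) \<Rightarrow> ('a \<Rightarrow> real)" where
  "isom_act x0 T h = (\<lambda>x. h (inv T x) - h (inv T x0))"

end

theory Submission
  imports Defs
begin

text \<open>For \<open>0 < c \<le> 1\<close> the map \<open>y \<mapsto> \<sigma> x0 (T y) (1 - c)\<close> is a \<open>(1 - c)\<close>-contraction, hence has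
  almost fixed points \<open>y\<close> (\<open>X\<close> need not be complete). Such a \<open>y\<close> lies almost on the geodesic from \<open>x0\<close> to \<open>T y\<close>, at distance
  about \<open>c d(x0, T y)\<close> from \<open>T y\<close>; comparing with a point \<open>z\<close> of almost minimal displacement
  shows \<open>d(y, T y) \<approx> d\<^sub>T\<close>, and then \<open>d(T x, y) - d(x, y) \<approx> - d\<^sub>T\<close> for every \<open>x\<close>, with errors
  that vanish as \<open>c \<rightarrow> 0\<close>. A cluster point \<open>h\<close> of the corresponding functions \<open>h\<^sub>y\<close> in the compact
  metric compactification satisfies \<open>h (T x) = h x - d\<^sub>T\<close>. If \<open>h = h\<^sub>y\<close>, evaluating at \<open>y\<close> gives
  \<open>d(T y, y) = - d\<^sub>T \<le> 0\<close>; if \<open>T\<close> is onto, \<open>h \<circ> T\<^sup>-\<^sup>1 = h + d\<^sub>T\<close> and \<open>h x0 = 0\<close> give \<open>T h = h\<close>.\<close>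

lemma contraction_almost_fixed_point:
  fixes F :: "'a::metric_space \<Rightarrow> 'a"
  assumes lipschitz: "\<And>a b. dist (F a) (F b) \<le> r * dist a b"
    and "0 \<le> r" "r < 1" "0 < \<epsilon>"
  shows "\<exists>y. dist y (F y) < \<epsilon>"
proof -
  fix y0 :: 'a
  have step: "dist ((F ^^ n) y0) (F ((F ^^ n) y0)) \<le> r ^ n * dist y0 (F y0)" for n
  proof (induction n)
    case (Suc n)
    have "dist (F ((F ^^ n) y0)) (F (F ((F ^^ n) y0))) \<le> r * dist ((F ^^ n) y0) (F ((F ^^ n) y0))"
      by (rule lipschitz)
    also have "\<dots> \<le> r * (r ^ n * dist y0 (F y0))"
      using Suc.IH \<open>0 \<le> r\<close> by (rule mult_left_mono)
    finally show ?case by simp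
  qed simp
  have "(\<lambda>n. r ^ n * dist y0 (F y0)) \<longlonglongrightarrow> 0"
    using assms(2,3) by (intro tendsto_mult_left_zero LIMSEQ_power_zero) simp
  then have "eventually (\<lambda>n. r ^ n * dist y0 (F y0) < \<epsilon>) sequentially"
    using \<open>0 < \<epsilon>\<close> by (rule order_tendstoD(2))
  then obtain n where "r ^ n * dist y0 (F y0) < \<epsilon>"
    unfolding eventually_sequentially by blast
  then show ?thesis
    using step order_le_less_trans by blast
qed

lemma cluster_point_tendsto:
  fixes \<Phi> :: "'a::topological_space \<Rightarrow> 'b::t2_space"
  assumes "inf (nhds h) F \<noteq> bot" "continuous_on UNIV \<Phi>" "(\<Phi> \<longlongrightarrow> l) F"
  shows "\<Phi> h = l"
proof (rule tendsto_unique[OF assms(1)])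
  have "(\<Phi> \<longlongrightarrow> \<Phi> h) (at h)"
    using assms(2) by (simp add: continuous_on_def)
  then show "(\<Phi> \<longlongrightarrow> \<Phi> h) (inf (nhds h) F)"
    unfolding tendsto_at_iff_tendsto_nhds by (rule tendsto_mono[rotated]) simp
  show "(\<Phi> \<longlongrightarrow> l) (inf (nhds h) F)"
    using assms(3) by (rule tendsto_mono[rotated]) simp
qed

lemma hfun_lipschitz: "\<bar>hfun x0 p x - hfun x0 p z\<bar> \<le> dist x z"
  unfolding hfun_def
  using dist_triangle[of x p z] dist_triangle[of z p x] by (simp add: dist_commute abs_le_iff)

lemma hfun_base_point [simp]: "hfun x0 p x0 = 0"
  by (simp add: hfun_def)

lemma closure_range_hfun_subset:
  "closure (range (hfun x0)) \<subseteq> {f. one_lipschitz f \<and> f x0 = 0}"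
proof (rule closure_minimal)
  show "range (hfun x0) \<subseteq> {f. one_lipschitz f \<and> f x0 = 0}"
    using hfun_lipschitz by (auto simp: one_lipschitz_def)
  have "closed {f::'a \<Rightarrow> real. (\<forall>x z. \<bar>f x - f z\<bar> \<le> dist x z) \<and> f x0 = 0}"
    by (intro closed_Collect_conj closed_Collect_all closed_Collect_le closed_Collect_eq
        continuous_intros continuous_on_product_coordinates)
  then show "closed {f. one_lipschitz f \<and> f x0 = 0}"
    by (simp add: one_lipschitz_def)
qed

lemma metric_compactification_eq_closure:
  "metric_compactification x0 = closure (range (hfun x0))"
  using closure_range_hfun_subset unfolding metric_compactification_def by blast

lemma metric_functional_base_point: "h \<in> metric_compactification x0 \<Longrightarrow> h x0 = 0"
  using closure_range_hfun_subset unfolding metric_compactification_eq_closure by blast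

lemma compact_metric_compactification: "compact (metric_compactification x0)"
proof -
  define C :: "('a \<Rightarrow> real) set" where "C = PiE UNIV (\<lambda>x. {- dist x x0 .. dist x x0})"
  have "compactin (product_topology (\<lambda>_. euclidean) UNIV) C"
    unfolding C_def by (simp add: compactin_PiE)
  then have "compact C"
    by (simp add: euclidean_product_topology compactin_euclidean_iff)
  moreover have "metric_compactification x0 \<subseteq> C"
  proof
    fix f assume "f \<in> metric_compactification x0"
    then have "\<bar>f x - f x0\<bar> \<le> dist x x0" "f x0 = 0" for x
      using closure_range_hfun_subset
      by (auto simp: metric_compactification_eq_closure one_lipschitz_def)
    then have "f x \<in> {- dist x x0 .. dist x x0}" for x
      by (simp add: abs_le_iff minus_le_iff)
    then show "f \<in> C"
      by (simp add: C_def PiE_UNIV_domain)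
  qed
  ultimately have "compact (C \<inter> metric_compactification x0)"
    by (intro compact_Int_closed) (simp_all add: metric_compactification_eq_closure)
  with \<open>metric_compactification x0 \<subseteq> C\<close> show ?thesis
    by (simp add: Int_absorb1)
qed

lemma exists_metric_functional_with_limit_drift:
  fixes T :: "'a::metric_space \<Rightarrow> 'a" and y :: "nat \<Rightarrow> 'a"
  assumes "\<And>x. (\<lambda>n. hfun x0 (y n) (T x) - hfun x0 (y n) x) \<longlonglongrightarrow> L x"
  shows "\<exists>h\<in>metric_compactification x0. \<forall>x. h (T x) - h x = L x"
proof -
  \<comment> \<open>The product topology is not first countable, so we pass to a cluster point of the
      sequence rather than to a convergent subsequence.\<close>
  define F where "F = filtermap (\<lambda>n. hfun x0 (y n)) sequentially"
  have "F \<noteq> bot"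
    by (simp add: F_def filtermap_bot_iff)
  moreover have "eventually (\<lambda>f. f \<in> metric_compactification x0) F"
    unfolding F_def eventually_filtermap metric_compactification_eq_closure
    by (intro always_eventually allI closure_subset[THEN subsetD]) simp
  ultimately obtain h where h: "h \<in> metric_compactification x0" "inf (nhds h) F \<noteq> bot"
    using compact_metric_compactification unfolding compact_filter by blast
  have "h (T x) - h x = L x" for x
  proof (rule cluster_point_tendsto[OF h(2)])
    show "continuous_on UNIV (\<lambda>f::'a \<Rightarrow> real. f (T x) - f x)"
      by (intro continuous_intros continuous_on_product_coordinates)
    show "((\<lambda>f. f (T x) - f x) \<longlongrightarrow> L x) F"
      unfolding F_def filterlim_filtermap by (rule assms)
  qed
  with h(1) show ?thesis
    by blast
qed

lemma isom_act_eq_self: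
  assumes "surj T" "\<And>x. h (T x) = h x - a" "h x0 = 0"
  shows "isom_act x0 T h = h"
proof
  fix x
  have "h (inv T x) = h x + a" for x
    using assms(2)[of "inv T x"] surj_f_inv_f[OF assms(1), of x] by simp
  then show "isom_act x0 T h x = h x"
    by (simp add: isom_act_def assms(3))
qed

lemma weak_conical_bicombingD:
  assumes "weak_conical_bicombing \<sigma>"
  shows weak_conical_bicombing_start: "\<sigma> x y 0 = x"
    and weak_conical_bicombing_end: "\<sigma> x y 1 = y"
    and weak_conical_bicombing_geodesic:
      "s \<in> {0..1} \<Longrightarrow> t \<in> {0..1} \<Longrightarrow> dist (\<sigma> x y s) (\<sigma> x y t) = \<bar>s - t\<bar> * dist x y"
    and weak_conical_bicombing_conical:
      "t \<in> {0..1} \<Longrightarrow> dist (\<sigma> x y t) (\<sigma> x y' t) \<le> t * dist y y'"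
  using assms unfolding weak_conical_bicombing_def by blast+

lemma weak_conical_bicombing_dist_start:
  assumes "weak_conical_bicombing \<sigma>" "t \<in> {0..1}"
  shows "dist x (\<sigma> x y t) = t * dist x y"
  using weak_conical_bicombing_geodesic[OF assms(1), of 0 t x y] assms
  by (simp add: weak_conical_bicombing_start)

lemma weak_conical_bicombing_dist_end:
  assumes "weak_conical_bicombing \<sigma>" "t \<in> {0..1}"
  shows "dist (\<sigma> x y t) y = (1 - t) * dist x y"
  using weak_conical_bicombing_geodesic[OF assms(1), of t 1 x y] assms
  by (simp add: weak_conical_bicombing_end)

definition translation_length :: "('a::metric_space \<Rightarrow> 'a) \<Rightarrow> real" where
  "translation_length T = (INF x. dist x (T x))"

lemma bdd_below_displacement: "bdd_below (range (\<lambda>x. dist x (T x)))"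
  by (rule bdd_belowI[where m = 0]) auto

lemma translation_length_le: "translation_length T \<le> dist x (T x)"
  unfolding translation_length_def by (rule cINF_lower[OF bdd_below_displacement]) simp

lemma translation_length_nonneg: "0 \<le> translation_length T"
  unfolding translation_length_def by (rule cINF_greatest) auto

lemma translation_length_approx:
  assumes "0 < \<epsilon>"
  obtains z where "dist z (T z) < translation_length T + \<epsilon>"
proof -
  have "(INF x. dist x (T x)) < translation_length T + \<epsilon>"
    using assms unfolding translation_length_def by simp
  then show ?thesis
    using that by (auto simp: cINF_less_iff[OF _ bdd_below_displacement])
qed

locale bicombing_isometric_embedding =
  fixes \<sigma> :: "'a::metric_space \<Rightarrow> 'a \<Rightarrow> real \<Rightarrow> 'a" and T :: "'a \<Rightarrow> 'a"
  assumes bicombing: "weak_conical_bicombing \<sigma>"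
    and isometric: "dist (T x) (T y) = dist x y"
begin

text \<open>The bicombing analogue of \<open>y \<mapsto> p + (1 - c) (T y - p)\<close>.\<close>

definition scaled_map :: "'a \<Rightarrow> real \<Rightarrow> 'a \<Rightarrow> 'a" where
  "scaled_map p c y = \<sigma> p (T y) (1 - c)"

lemma dist_scaled_map_image:
  "c \<in> {0..1} \<Longrightarrow> dist (scaled_map p c y) (T y) = c * dist p (T y)"
  unfolding scaled_map_def by (simp add: weak_conical_bicombing_dist_end[OF bicombing])

lemma dist_base_scaled_map:
  "c \<in> {0..1} \<Longrightarrow> dist p (scaled_map p c y) = (1 - c) * dist p (T y)"
  unfolding scaled_map_def by (simp add: weak_conical_bicombing_dist_start[OF bicombing])

lemma scaled_map_lipschitz:
  "c \<in> {0..1} \<Longrightarrow> dist (scaled_map p c a) (scaled_map p c b) \<le> (1 - c) * dist a b"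
  unfolding scaled_map_def
  using weak_conical_bicombing_conical[OF bicombing, of "1 - c" p "T a" "T b"]
  by (simp add: isometric)

lemma scaled_map_almost_fixed_point:
  assumes "c \<in> {0<..1}" "0 < \<epsilon>"
  shows "\<exists>y. dist y (scaled_map p c y) < \<epsilon>"
  using assms scaled_map_lipschitz by (intro contraction_almost_fixed_point[where r = "1 - c"]) auto

lemma almost_fixed_point_displacement_le:
  assumes "c \<in> {0..1}" "dist y (scaled_map p c y) \<le> \<delta>"
  shows "dist y (T y) \<le> \<delta> + c * dist p (T y)"
  using dist_triangle[of y "T y" "scaled_map p c y"] assms dist_scaled_map_image[of c p y] by simp

lemma almost_fixed_point_displacement_le_displacement:
  assumes c: "c \<in> {0..1}" and y: "dist y (scaled_map p c y) \<le> \<delta>"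
  shows "dist y (T y) \<le> dist z (T z) + 2 * \<delta> + 2 * c * dist p (T z)"
proof -
  define a where "a = dist y z"
  have "a \<le> dist y (scaled_map p c y) + dist (scaled_map p c y) (scaled_map p c z)
             + dist (scaled_map p c z) (T z) + dist (T z) z"
    unfolding a_def
    using dist_triangle[of y z "scaled_map p c y"]
      dist_triangle[of "scaled_map p c y" z "scaled_map p c z"]
      dist_triangle[of "scaled_map p c z" z "T z"] by linarith
  also have "\<dots> \<le> \<delta> + (1 - c) * a + c * dist p (T z) + dist z (T z)"
    using y scaled_map_lipschitz[OF c, of p y z] dist_scaled_map_image[OF c, of p z]
    by (simp add: a_def dist_commute)
  finally have ca: "c * a \<le> \<delta> + c * dist p (T z) + dist z (T z)"
    by (simp add: algebra_simps)
  have "dist p (T y) \<le> dist p (T z) + a"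
    using dist_triangle[of p "T y" "T z"] by (simp add: a_def isometric dist_commute)
  then have "c * dist p (T y) \<le> c * dist p (T z) + c * a"
    using c by (simp add: mult_left_mono flip: distrib_left)
  then show ?thesis
    using almost_fixed_point_displacement_le[OF c y] ca by linarith
qed

lemma almost_fixed_point_drift_le:
  assumes c: "c \<in> {0..1}" and y: "dist y (scaled_map p c y) \<le> \<delta>"
    and m: "m \<le> dist y (T y)"
  shows "dist (T x) y - dist x y + m \<le> 2 * \<delta> + c * (m + dist p x + dist p (T x))"
proof -
  define D where "D = dist p (T y)"
  have "dist (T x) y \<le> dist (T x) (scaled_map p c x) + dist (scaled_map p c x) (scaled_map p c y)
          + dist (scaled_map p c y) y"
    using dist_triangle[of "T x" y "scaled_map p c x"]
      dist_triangle[of "scaled_map p c x" y "scaled_map p c y"] by linarith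
  also have "\<dots> \<le> c * dist p (T x) + (1 - c) * dist x y + \<delta>"
    using y scaled_map_lipschitz[OF c, of p x y] dist_scaled_map_image[OF c, of p x]
    by (simp add: dist_commute)
  finally have image: "dist (T x) y - dist x y \<le> \<delta> + c * dist p (T x) - c * dist x y"
    by (simp add: algebra_simps)
  have "(1 - c) * D \<le> dist x y + \<delta> + dist p x"
    using dist_triangle[of p "scaled_map p c y" y] dist_triangle[of p y x] y
      dist_base_scaled_map[OF c, of p y] by (simp add: D_def dist_commute)
  then have "c * ((1 - c) * D) \<le> c * (dist x y + \<delta> + dist p x)"
    using c by (simp add: mult_left_mono)
  moreover have "(1 - c) * (m - \<delta>) \<le> (1 - c) * (c * D)"
    using m almost_fixed_point_displacement_le[OF c y] c by (intro mult_left_mono) (auto simp: D_def)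
  ultimately have "(1 - c) * (m - \<delta>) \<le> c * (dist x y + \<delta> + dist p x)"
    by (simp add: algebra_simps)
  with image show ?thesis
    by (simp add: algebra_simps)
qed

lemma exists_point_with_almost_constant_drift:
  assumes "0 < \<delta>" "\<delta> \<le> 1"
  shows "\<exists>y. \<forall>x. \<bar>dist (T x) y - dist x y + translation_length T\<bar>
                  \<le> \<delta> * (5 + translation_length T + dist p x + dist p (T x))"
proof -
  define dT where "dT = translation_length T"
  obtain z where z: "dist z (T z) < dT + \<delta>"
    using translation_length_approx[OF assms(1)] unfolding dT_def by blast
  define b where "b = dist p (T z)"
  define c where "c = \<delta> / (1 + b)"
  have "0 \<le> b" "0 \<le> \<delta> * b"
    using assms by (simp_all add: b_def)
  then have c: "c \<in> {0<..1}" "c \<le> \<delta>"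
    using assms by (auto simp: c_def divide_le_eq algebra_simps)
  have "c * b = \<delta> * (b / (1 + b))"
    by (simp add: c_def)
  also have "\<dots> \<le> \<delta>"
    using assms \<open>0 \<le> b\<close> by (intro mult_left_le) auto
  finally have cb: "c * dist p (T z) \<le> \<delta>"
    by (simp add: b_def)
  obtain y where y: "dist y (scaled_map p c y) < \<delta>"
    using scaled_map_almost_fixed_point[OF c(1) assms(1)] by blast
  have "dist y (T y) \<le> dist z (T z) + 2 * \<delta> + 2 * c * dist p (T z)"
    using c y by (intro almost_fixed_point_displacement_le_displacement) auto
  with z cb have disp: "dist y (T y) \<le> dT + 5 * \<delta>"
    by linarith
  show ?thesis
  proof (intro exI allI)
    fix x
    define K where "K = dT + dist p x + dist p (T x)"
    have "dist x y \<le> dist (T x) y + dist y (T y)"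
      using dist_triangle[of "T x" "T y" y] by (simp add: isometric dist_commute)
    with disp have lower: "- 5 * \<delta> \<le> dist (T x) y - dist x y + dT"
      by linarith
    have "dist (T x) y - dist x y + dT \<le> 2 * \<delta> + c * K"
      unfolding K_def dT_def using c y
      by (intro almost_fixed_point_drift_le translation_length_le) auto
    moreover have "c * K \<le> \<delta> * K" "0 \<le> \<delta> * K"
      using c assms translation_length_nonneg[of T]
      by (auto intro!: mult_right_mono simp: K_def dT_def)
    ultimately have "\<bar>dist (T x) y - dist x y + dT\<bar> \<le> 5 * \<delta> + \<delta> * K"
      using lower assms by (simp add: abs_le_iff)
    then show "\<bar>dist (T x) y - dist x y + translation_length T\<bar>
                 \<le> \<delta> * (5 + translation_length T + dist p x + dist p (T x))"
      by (simp add: K_def dT_def algebra_simps)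
  qed
qed

lemma exists_metric_functional_translated:
  "\<exists>h\<in>metric_compactification x0. \<forall>x. h (T x) = h x - translation_length T"
proof -
  define dT where "dT = translation_length T"
  define K where "K x = 5 + dT + dist x0 x + dist x0 (T x)" for x
  have "\<exists>y. \<forall>x. \<bar>dist (T x) y - dist x y + dT\<bar> \<le> 1 / Suc n * K x" for n
    unfolding K_def dT_def by (rule exists_point_with_almost_constant_drift) auto
  then obtain y where y: "\<And>n x. \<bar>dist (T x) (y n) - dist x (y n) + dT\<bar> \<le> 1 / Suc n * K x"
    by metis
  have "(\<lambda>n. hfun x0 (y n) (T x) - hfun x0 (y n) x) \<longlonglongrightarrow> - dT" for x
  proof -
    have "(\<lambda>n. 1 / real (Suc n) * K x) \<longlonglongrightarrow> 0"
      by (intro tendsto_mult_left_zero LIMSEQ_Suc[OF lim_inverse_n'])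
    then have "(\<lambda>n. dist (T x) (y n) - dist x (y n) + dT) \<longlonglongrightarrow> 0"
      by (rule Lim_null_comparison[OF always_eventually, rotated]) (use y in simp)
    from tendsto_add[OF this tendsto_const[of "- dT"]] show ?thesis
      by (simp add: hfun_def)
  qed
  then obtain h where "h \<in> metric_compactification x0" "\<And>x. h (T x) - h x = - dT"
    using exists_metric_functional_with_limit_drift[of x0 y T "\<lambda>_. - dT"] by blast
  then show ?thesis
    unfolding dT_def by (metis diff_minus_eq_add diff_add_cancel uminus_add_conv_diff)
qed

end

theorem theorem1:
  fixes T :: "'a::metric_space \<Rightarrow> 'a" and x0 :: 'a
  assumes "\<exists>\<sigma>::'a \<Rightarrow> 'a \<Rightarrow> real \<Rightarrow> 'a. weak_conical_bicombing \<sigma>"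
    and "\<forall>x y. dist (T x) (T y) = dist x y"
  shows "\<exists>h\<in>metric_compactification x0.
           (\<forall>x. h (T x) = h x - (INF z. dist z (T z))) \<and>
           (\<forall>y. h = hfun x0 y \<longrightarrow> T y = y) \<and>
           (surj T \<longrightarrow> isom_act x0 T h = h)"
proof -
  obtain \<sigma> :: "'a \<Rightarrow> 'a \<Rightarrow> real \<Rightarrow> 'a" where "weak_conical_bicombing \<sigma>"
    using assms(1) by blast
  then interpret bicombing_isometric_embedding \<sigma> T
    using assms(2) by unfold_locales auto
  obtain h where h: "h \<in> metric_compactification x0"
    and hT: "\<And>x. h (T x) = h x - translation_length T"
    using exists_metric_functional_translated by blast
  have "T p = p" if "h = hfun x0 p" for p
  proof -
    have "dist (T p) p \<le> 0"
      using hT[of p] translation_length_nonneg[of T] by (simp add: that hfun_def)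
    then show ?thesis
      by simp
  qed
  moreover have "isom_act x0 T h = h" if "surj T"
    using isom_act_eq_self[OF that hT metric_functional_base_point[OF h]] .
  ultimately show ?thesis
    using h hT unfolding translation_length_def by blast
qed

end
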